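(* Let $G$ be a graph, $H=G^2$, and $n\ge 1$. Then every induced subgraph of $H$ isomorphic to $K_{1,n}$ is contained in a (not necessarily induced) subgraph of $H$ isomorphic to $(D_n)^2$ or to $(D_n^-)^2$.
   Context: All graphs are finite and simple. For a graph $H$, the square $H^2$ has vertex set $V(H)$, two distinct vertices being adjacent iff their distance in $H$ is at most $2$. $D_n$ is the graph with vertex set $\{v,u_1,\dots,u_n,w_1,\dots,w_n\}$ and edge set $\{vu_i:1\le i\le n\}\cup\{u_iw_i:1\le i\le n\}$ (a subdivided star), and $D_n^-$ is the graph $D_n-w_n$ obtained by deleting the vertex $w_n$. *)

theory Defs
  imports Main
begin

definition simple_graph :: "'a set \<Rightarrow> ('a \<Rightarrow> 'a \<Rightarrow> bool) \<Rightarrow> bool" where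
  "simple_graph V E \<longleftrightarrow> finite V \<and>
     (\<forall>u v. E u v \<longrightarrow> u \<in> V \<and> v \<in> V \<and> u \<noteq> v \<and> E v u)"

definition graph_square :: "'a set \<Rightarrow> ('a \<Rightarrow> 'a \<Rightarrow> bool) \<Rightarrow> 'a \<Rightarrow> 'a \<Rightarrow> bool" where
  "graph_square V E u w \<longleftrightarrow> u \<in> V \<and> w \<in> V \<and> u \<noteq> w \<and>
     (E u w \<or> (\<exists>x\<in>V. E u x \<and> E x w))"

definition is_subgraph :: "'a set \<Rightarrow> ('a \<Rightarrow> 'a \<Rightarrow> bool) \<Rightarrow> 'a set \<Rightarrow> ('a \<Rightarrow> 'a \<Rightarrow> bool) \<Rightarrow> bool" where
  "is_subgraph V1 E1 V2 E2 \<longleftrightarrow> V1 \<subseteq> V2 \<and>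
     (\<forall>u v. E1 u v \<longrightarrow> u \<in> V1 \<and> v \<in> V1 \<and> E2 u v)"

definition induced_edges :: "'a set \<Rightarrow> ('a \<Rightarrow> 'a \<Rightarrow> bool) \<Rightarrow> 'a \<Rightarrow> 'a \<Rightarrow> bool" where
  "induced_edges S E u v \<longleftrightarrow> u \<in> S \<and> v \<in> S \<and> E u v"

definition graph_iso :: "'a set \<Rightarrow> ('a \<Rightarrow> 'a \<Rightarrow> bool) \<Rightarrow> 'b set \<Rightarrow> ('b \<Rightarrow> 'b \<Rightarrow> bool) \<Rightarrow> bool" where
  "graph_iso V1 E1 V2 E2 \<longleftrightarrow> (\<exists>f. bij_betw f V1 V2 \<and>
     (\<forall>u\<in>V1. \<forall>v\<in>V1. E1 u v \<longleftrightarrow> E2 (f u) (f v)))"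

definition star_V :: "nat \<Rightarrow> nat set" where "star_V n = {0..n}"
definition star_E :: "nat \<Rightarrow> nat \<Rightarrow> nat \<Rightarrow> bool" where
  "star_E n a b \<longleftrightarrow> a \<in> {0..n} \<and> b \<in> {0..n} \<and> ((a = 0 \<and> b \<noteq> 0) \<or> (b = 0 \<and> a \<noteq> 0))"

(* D_n: v = 0, u_i = i, w_i = n + i  (1 \<le> i \<le> n) *)
definition D_V :: "nat \<Rightarrow> nat set" where "D_V n = {0..2*n}"
definition D_E :: "nat \<Rightarrow> nat \<Rightarrow> nat \<Rightarrow> bool" where
  "D_E n a b \<longleftrightarrow> (\<exists>i\<in>{1..n}. (a = 0 \<and> b = i) \<or> (a = i \<and> b = 0)
                            \<or> (a = i \<and> b = n + i) \<or> (a = n + i \<and> b = i))"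

definition Dm_V :: "nat \<Rightarrow> nat set" where "Dm_V n = D_V n - {2*n}"
definition Dm_E :: "nat \<Rightarrow> nat \<Rightarrow> nat \<Rightarrow> bool" where
  "Dm_E n = induced_edges (Dm_V n) (D_E n)"

end

theory Submission
  imports Defs
begin

text \<open>
  Let the induced star have centre \<open>c\<close> and leaves \<open>l\<^sub>1, \<dots>, l\<^sub>n\<close>. Each leaf is adjacent
  to \<open>c\<close> in \<open>G\<close> or has a common neighbour \<open>m\<^sub>i\<close> with \<open>c\<close>. Since the leaves are pairwise at
  distance at least 3 in \<open>G\<close>, the closed neighbourhoods of the leaves are pairwise disjoint;
  hence at most one leaf, say \<open>l\<^sub>n\<close>, is adjacent to \<open>c\<close>, and \<open>c\<close>, the \<open>m\<^sub>i\<close> and the \<open>l\<^sub>i\<close> are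
  all distinct. So \<open>v \<mapsto> c, u\<^sub>i \<mapsto> m\<^sub>i, w\<^sub>i \<mapsto> l\<^sub>i\<close> embeds \<open>D\<^sub>n\<close> into \<open>G\<close>, or, if \<open>l\<^sub>n\<close> is adjacent
  to \<open>c\<close>, \<open>u\<^sub>n \<mapsto> l\<^sub>n\<close> embeds \<open>D\<^sub>n\<^sup>-\<close>. An embedding of a graph into \<open>G\<close> maps its square into
  \<open>G\<^sup>2\<close>, and the star edges are images of edges \<open>v w\<^sub>i\<close> (resp. \<open>v u\<^sub>n\<close>) of the square.
\<close>

lemma simple_graph_sym: "simple_graph V E \<Longrightarrow> E u v \<Longrightarrow> E v u"
  unfolding simple_graph_def by blast

lemma simple_graph_irrefl: "simple_graph V E \<Longrightarrow> E u v \<Longrightarrow> u \<noteq> v"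
  unfolding simple_graph_def by blast

lemma simple_graph_vertices: "simple_graph V E \<Longrightarrow> E u v \<Longrightarrow> u \<in> V \<and> v \<in> V"
  unfolding simple_graph_def by blast

lemma graph_square_sym: "symp E \<Longrightarrow> graph_square V E u w \<Longrightarrow> graph_square V E w u"
  unfolding graph_square_def symp_def by blast

lemma graph_square_irrefl: "\<not> graph_square V E u u"
  unfolding graph_square_def by simp

lemma graph_square_common_neighbour:
  "simple_graph V E \<Longrightarrow> E x u \<Longrightarrow> E x w \<Longrightarrow> u \<noteq> w \<Longrightarrow> graph_square V E u w"
  unfolding graph_square_def simple_graph_def by blast

definition map_edges :: "('b \<Rightarrow> 'a) \<Rightarrow> 'b set \<Rightarrow> ('b \<Rightarrow> 'b \<Rightarrow> bool) \<Rightarrow> 'a \<Rightarrow> 'a \<Rightarrow> bool" where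
  "map_edges \<phi> D R u v \<longleftrightarrow> (\<exists>a\<in>D. \<exists>b\<in>D. u = \<phi> a \<and> v = \<phi> b \<and> R a b)"

lemma map_edgesI: "a \<in> D \<Longrightarrow> b \<in> D \<Longrightarrow> R a b \<Longrightarrow> map_edges \<phi> D R (\<phi> a) (\<phi> b)"
  unfolding map_edges_def by blast

lemma graph_iso_map_edges:
  assumes "inj_on \<phi> D"
  shows "graph_iso (\<phi> ` D) (map_edges \<phi> D R) D R"
  unfolding graph_iso_def
proof (intro exI conjI ballI)
  show "bij_betw (the_inv_into D \<phi>) (\<phi> ` D) D"
    using assms by (simp add: bij_betw_the_inv_into inj_on_imp_bij_betw)
  fix u v assume "u \<in> \<phi> ` D" "v \<in> \<phi> ` D"
  then obtain a b where ab: "a \<in> D" "b \<in> D" "u = \<phi> a" "v = \<phi> b" by blast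
  have "map_edges \<phi> D R u v \<longleftrightarrow> R a b"
    using ab assms unfolding map_edges_def inj_on_def by metis
  then show "map_edges \<phi> D R u v \<longleftrightarrow> R (the_inv_into D \<phi> u) (the_inv_into D \<phi> v)"
    using ab assms by (simp add: the_inv_into_f_f)
qed

lemma graph_square_embedding:
  assumes inj: "inj_on \<phi> D" and img: "\<phi> ` D \<subseteq> V"
    and hom: "\<And>a b. a \<in> D \<Longrightarrow> b \<in> D \<Longrightarrow> R a b \<Longrightarrow> E (\<phi> a) (\<phi> b)"
    and sq: "graph_square D R a b"
  shows "graph_square V E (\<phi> a) (\<phi> b)"
proof -
  have "a \<in> D" "b \<in> D" "\<phi> a \<noteq> \<phi> b"
    using sq inj unfolding graph_square_def inj_on_def by blast+
  with sq show ?thesis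
    using img hom unfolding graph_square_def by (metis image_subset_iff)
qed

lemma ex_square_copy:
  assumes inj: "inj_on \<phi> D" and img: "\<phi> ` D \<subseteq> V"
    and hom: "\<And>a b. a \<in> D \<Longrightarrow> b \<in> D \<Longrightarrow> R a b \<Longrightarrow> E (\<phi> a) (\<phi> b)"
    and sub: "is_subgraph S HS (\<phi> ` D) (map_edges \<phi> D (graph_square D R))"
  shows "\<exists>T ET. is_subgraph S HS T ET \<and> is_subgraph T ET V (graph_square V E)
            \<and> graph_iso T ET D (graph_square D R)"
proof (intro exI conjI)
  have "graph_square V E (\<phi> a) (\<phi> b)" if "graph_square D R a b" for a b
    using graph_square_embedding[OF inj img _ that] hom by blast
  then show "is_subgraph (\<phi> ` D) (map_edges \<phi> D (graph_square D R)) V (graph_square V E)"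
    unfolding is_subgraph_def map_edges_def using img by blast
qed (use sub graph_iso_map_edges[OF inj] in auto)

lemma induced_star_iso_center_leaves:
  assumes "graph_iso S (induced_edges S H) (star_V n) (star_E n)"
  obtains c L where "S = insert c L" "finite L" "card L = n"
    "\<And>x. x \<in> L \<Longrightarrow> H c x" "\<And>x y. x \<in> L \<Longrightarrow> y \<in> L \<Longrightarrow> \<not> H x y"
proof -
  obtain f where bij: "bij_betw f S {0..n}"
    and edge: "\<And>u v. u \<in> S \<Longrightarrow> v \<in> S \<Longrightarrow> induced_edges S H u v \<longleftrightarrow> star_E n (f u) (f v)"
    using assms unfolding graph_iso_def star_V_def by blast
  define c where "c = inv_into S f 0"
  have c: "c \<in> S" "f c = 0"
    using bij unfolding c_def bij_betw_def by (auto simp: inv_into_into f_inv_into_f)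
  define L where "L = S - {c}"
  have leaf: "f x \<in> {1..n}" if "x \<in> L" for x
    using that bij c unfolding L_def bij_betw_def inj_on_def by fastforce
  have "finite S" "card S = Suc n"
    using bij by (auto simp: bij_betw_finite bij_betw_same_card)
  then have "finite L" "card L = n"
    using c by (auto simp: L_def)
  moreover have "H c x" if "x \<in> L" for x
    using edge[of c x] c leaf[OF that] that by (auto simp: L_def induced_edges_def star_E_def)
  moreover have "\<not> H x y" if "x \<in> L" "y \<in> L" for x y
    using edge[of x y] leaf[OF that(1)] leaf[OF that(2)] that by (auto simp: L_def induced_edges_def star_E_def)
  moreover have "S = insert c L"
    using c by (auto simp: L_def)
  ultimately show thesis
    using that by blast
qed

lemma ex_enumeration_last:
  assumes "finite L" "card L = n" "x \<in> L"
  obtains l where "bij_betw l {1..n} L" "l n = x"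
proof -
  have n: "n \<ge> 1" "card (L - {x}) = n - 1"
    using assms card_0_eq by fastforce+
  then obtain h where h: "bij_betw h {1..n - 1} (L - {x})"
    using ex_bij_betw_nat_finite_1[of "L - {x}"] assms(1) by auto
  have "bij_betw (h(n := x)) {1..n - 1} (L - {x})"
    using h by (rule bij_betw_cong[THEN iffD1, rotated]) auto
  then have "bij_betw (h(n := x)) ({1..n - 1} \<union> {n}) (L - {x} \<union> {x})"
    using notIn_Un_bij_betw[of n "{1..n - 1}" "h(n := x)" "L - {x}"] n(1) by auto
  moreover have "{1..n - 1} \<union> {n} = {1..n}" "L - {x} \<union> {x} = L"
    using n assms(3) by auto
  ultimately show thesis
    using that by simp
qed

locale star_in_square =
  fixes V :: "'a set" and E :: "'a \<Rightarrow> 'a \<Rightarrow> bool" and c :: 'a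
    and l :: "nat \<Rightarrow> 'a" and n :: nat
  assumes simple: "simple_graph V E"
    and n_pos: "n \<ge> 1"
    and leaves_inj: "inj_on l {1..n}"
    and center_leaf: "i \<in> {1..n} \<Longrightarrow> graph_square V E c (l i)"
    and leaf_leaf: "i \<in> {1..n} \<Longrightarrow> j \<in> {1..n} \<Longrightarrow> i \<noteq> j \<Longrightarrow> \<not> graph_square V E (l i) (l j)"
begin

lemmas edge_sym = simple_graph_sym[OF simple]
  and edge_irrefl = simple_graph_irrefl[OF simple]
  and edge_vertices = simple_graph_vertices[OF simple]

lemma near_leaf_unique:
  assumes i: "i \<in> {1..n}" and j: "j \<in> {1..n}"
    and "x = l i \<or> E x (l i)" and "x = l j \<or> E x (l j)"
  shows "i = j"
proof (rule ccontr)
  assume ij: "i \<noteq> j"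
  then have "l i \<noteq> l j"
    using leaves_inj i j unfolding inj_on_def by blast
  moreover have "l i \<in> V" "l j \<in> V"
    using center_leaf[OF i] center_leaf[OF j] unfolding graph_square_def by auto
  ultimately have "graph_square V E (l i) (l j)"
    using assms(3,4) edge_sym edge_vertices unfolding graph_square_def by blast
  with leaf_leaf[OF i j ij] show False ..
qed

definition mid :: "nat \<Rightarrow> 'a" where
  "mid i = (if E c (l i) then l i else SOME x. E c x \<and> E x (l i))"

lemma mid_adj_leaf:
  assumes "i \<in> {1..n}" "\<not> E c (l i)"
  shows "E (mid i) (l i)" and "E c (mid i)"
proof -
  have "\<exists>x. E c x \<and> E x (l i)"
    using center_leaf[OF assms(1)] assms(2) unfolding graph_square_def by blast
  from someI_ex[OF this] assms(2)
  show "E (mid i) (l i)" "E c (mid i)" by (simp_all add: mid_def)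
qed

lemma center_adj_mid: "i \<in> {1..n} \<Longrightarrow> E c (mid i)"
  using mid_adj_leaf(2) by (cases "E c (l i)") (simp_all add: mid_def)

lemma mid_near_leaf: "i \<in> {1..n} \<Longrightarrow> mid i = l i \<or> E (mid i) (l i)"
  using mid_adj_leaf(1) by (cases "E c (l i)") (simp_all add: mid_def)

definition spider :: "nat \<Rightarrow> 'a" where
  "spider a = (if a = 0 then c else if a \<le> n then mid a else l (a - n))"

lemma spider_center [simp]: "spider 0 = c"
  and spider_mid [simp]: "i \<in> {1..n} \<Longrightarrow> spider i = mid i"
  and spider_leaf [simp]: "i \<in> {1..n} \<Longrightarrow> spider (n + i) = l i"
  by (simp_all add: spider_def)

lemma spider_near_leaf:
  assumes "a \<in> {1..2*n}"
  obtains i where "i \<in> {1..n}" "a = i \<or> a = n + i" "spider a = l i \<or> E (spider a) (l i)"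
proof (cases "a \<le> n")
  case True
  then show thesis using that[of a] assms mid_near_leaf[of a] by auto
next
  case False
  then have "a - n \<in> {1..n}" "a = n + (a - n)"
    using assms by auto
  then show thesis using that[of "a - n"] by (metis spider_leaf)
qed

lemma spider_in_V: "spider ` {0..2*n} \<subseteq> V"
proof
  fix x assume "x \<in> spider ` {0..2*n}"
  then obtain a where a: "a \<in> {0..2*n}" "x = spider a" by blast
  have vertices: "c \<in> V" "l i \<in> V" "mid i \<in> V" if "i \<in> {1..n}" for i
    using center_leaf[OF that] edge_vertices[OF center_adj_mid[OF that]]
    unfolding graph_square_def by auto
  show "x \<in> V"
  proof (cases "a = 0")
    case True
    then show ?thesis using a vertices n_pos by auto
  next
    case False
    with a have "a \<in> {1..2*n}" by auto
    then obtain i where "i \<in> {1..n}" "a = i \<or> a = n + i"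
      using spider_near_leaf by blast
    then show ?thesis using a vertices by auto
  qed
qed

lemma spider_ne_center:
  assumes "a \<in> {1..2*n}"
  shows "spider a \<noteq> c"
proof -
  obtain i where i: "i \<in> {1..n}" and "a = i \<or> a = n + i"
    using spider_near_leaf[OF assms] by blast
  then consider "spider a = mid i" | "spider a = l i" by auto
  then show ?thesis
    using edge_irrefl[OF center_adj_mid[OF i]] center_leaf[OF i]
    by cases (auto simp: graph_square_def)
qed

lemma spider_inj_on:
  assumes D: "D \<subseteq> {0..2*n}"
    and mid_leaf: "\<And>i. i \<in> {1..n} \<Longrightarrow> n + i \<in> D \<Longrightarrow> E (mid i) (l i)"
  shows "inj_on spider D"
proof (rule inj_onI)
  fix a b assume a: "a \<in> D" and b: "b \<in> D" and eq: "spider a = spider b"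
  have nonzero: "x \<in> {1..2*n}" if "x \<in> D" "x \<noteq> 0" for x
    using that D by auto
  have "a = 0 \<longleftrightarrow> b = 0"
    using spider_ne_center[OF nonzero[OF a]] spider_ne_center[OF nonzero[OF b]] eq
    by (metis spider_center)
  then consider "a = 0" "b = 0" | "a \<in> {1..2*n}" "b \<in> {1..2*n}"
    using nonzero a b by blast
  then show "a = b"
  proof cases
    case 2
    obtain i where i: "i \<in> {1..n}" "a = i \<or> a = n + i" "spider a = l i \<or> E (spider a) (l i)"
      using spider_near_leaf[OF 2(1)] .
    obtain j where j: "j \<in> {1..n}" "b = j \<or> b = n + j" "spider b = l j \<or> E (spider b) (l j)"
      using spider_near_leaf[OF 2(2)] .
    have "i = j"
      using near_leaf_unique[OF i(1) j(1) i(3)] j(3) eq by simp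
    show "a = b"
    proof (rule ccontr)
      assume "a \<noteq> b"
      then have "a = i \<and> b = n + i \<or> a = n + i \<and> b = i"
        using i(2) j(2) \<open>i = j\<close> by blast
      then have "mid i = l i" "n + i \<in> D"
        using i(1) eq a b by auto
      then show False
        using edge_irrefl[OF mid_leaf[OF i(1)]] by simp
    qed
  qed simp
qed

lemma spider_hom:
  assumes "a \<in> D" "b \<in> D" "D_E n a b"
    and mid_leaf: "\<And>i. i \<in> {1..n} \<Longrightarrow> n + i \<in> D \<Longrightarrow> E (mid i) (l i)"
  shows "E (spider a) (spider b)"
proof -
  obtain i where i: "i \<in> {1..n}"
    and "(a = 0 \<and> b = i) \<or> (a = i \<and> b = 0) \<or> (a = i \<and> b = n + i) \<or> (a = n + i \<and> b = i)"
    using assms(3) unfolding D_E_def by blast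
  then show ?thesis
    using assms(1,2) center_adj_mid[OF i] mid_leaf[OF i] edge_sym by auto
qed

lemma spider_square_copy:
  assumes D: "D \<subseteq> {0..2*n}" "0 \<in> D"
    and mid_leaf: "\<And>i. i \<in> {1..n} \<Longrightarrow> n + i \<in> D \<Longrightarrow> E (mid i) (l i)"
    and DE: "\<And>a b. DE a b \<Longrightarrow> D_E n a b" "symp DE"
    and leaf_pos: "\<And>i. i \<in> {1..n} \<Longrightarrow> p i \<in> D \<and> spider (p i) = l i \<and> graph_square D DE 0 (p i)"
  defines "S \<equiv> insert c (l ` {1..n})"
  shows "\<exists>T ET. is_subgraph S (induced_edges S (graph_square V E)) T ET
            \<and> is_subgraph T ET V (graph_square V E) \<and> graph_iso T ET D (graph_square D DE)"
proof (rule ex_square_copy)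
  show "inj_on spider D"
    using spider_inj_on[OF D(1) mid_leaf] .
  show "spider ` D \<subseteq> V"
    using spider_in_V D(1) by blast
  show "E (spider a) (spider b)" if "a \<in> D" "b \<in> D" "DE a b" for a b
    using spider_hom[OF that(1,2) DE(1)[OF that(3)] mid_leaf] .
  have leaf_image: "l i \<in> spider ` D" if "i \<in> {1..n}" for i
    using leaf_pos[OF that] by (metis image_eqI)
  have "S \<subseteq> spider ` D"
    using image_eqI[of c spider 0 D, OF spider_center[symmetric] D(2)] leaf_image unfolding S_def by blast
  moreover have "map_edges spider D (graph_square D DE) u v"
    if u: "u \<in> S" and v: "v \<in> S" and uv: "graph_square V E u v" for u v
  proof -
    have star_edge: "map_edges spider D (graph_square D DE) c (l i)"
      "map_edges spider D (graph_square D DE) (l i) c" if "i \<in> {1..n}" for i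
    proof -
      have "p i \<in> D" "spider (p i) = l i" "graph_square D DE 0 (p i)"
        using leaf_pos[OF that] by blast+
      then show "map_edges spider D (graph_square D DE) c (l i)"
        "map_edges spider D (graph_square D DE) (l i) c"
        using map_edgesI[OF D(2)] map_edgesI[OF _ D(2)] graph_square_sym[OF DE(2)]
        by (metis spider_center)+
    qed
    consider "u = c" "v = c" | j where "j \<in> {1..n}" "u = c" "v = l j"
      | i where "i \<in> {1..n}" "u = l i" "v = c"
      | i j where "i \<in> {1..n}" "j \<in> {1..n}" "u = l i" "v = l j"
      using u v unfolding S_def by blast
    then show ?thesis
    proof cases
      case 1
      then show ?thesis using uv by (simp add: graph_square_irrefl)
    next
      case (2 j)
      then show ?thesis using star_edge by simp
    next
      case (3 i)
      then show ?thesis using star_edge by simp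
    next
      case (4 i j)
      then show ?thesis
        using uv leaf_leaf[of i j] by (cases "i = j") (auto simp: graph_square_irrefl)
    qed
  qed
  ultimately show "is_subgraph S (induced_edges S (graph_square V E)) (spider ` D)
      (map_edges spider D (graph_square D DE))"
    unfolding is_subgraph_def induced_edges_def by blast
qed

lemma D_E_spokes: "i \<in> {1..n} \<Longrightarrow> D_E n 0 i \<and> D_E n i (n + i)"
  unfolding D_E_def by blast

lemma square_copy:
  assumes nonadjacent: "\<And>i. i \<in> {1..<n} \<Longrightarrow> \<not> E c (l i)"
  defines "S \<equiv> insert c (l ` {1..n})"
  shows "\<exists>T ET. is_subgraph S (induced_edges S (graph_square V E)) T ET
            \<and> is_subgraph T ET V (graph_square V E)
            \<and> (graph_iso T ET (D_V n) (graph_square (D_V n) (D_E n))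
               \<or> graph_iso T ET (Dm_V n) (graph_square (Dm_V n) (Dm_E n)))"
proof (cases "E c (l n)")
  case False
  have "\<exists>T ET. is_subgraph S (induced_edges S (graph_square V E)) T ET
      \<and> is_subgraph T ET V (graph_square V E) \<and> graph_iso T ET (D_V n) (graph_square (D_V n) (D_E n))"
    unfolding S_def
  proof (rule spider_square_copy[where p = "\<lambda>i. n + i"])
    show "D_V n \<subseteq> {0..2*n}" "0 \<in> D_V n"
      by (simp_all add: D_V_def)
    show "symp (D_E n)"
      unfolding symp_def D_E_def by blast
    show "E (mid i) (l i)" if "i \<in> {1..n}" "n + i \<in> D_V n" for i
      using mid_adj_leaf(1)[OF that(1)] nonadjacent False that by (cases "i = n") auto
    show "n + i \<in> D_V n \<and> spider (n + i) = l i \<and> graph_square (D_V n) (D_E n) 0 (n + i)"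
      if "i \<in> {1..n}" for i
      using D_E_spokes[OF that] that unfolding graph_square_def by (auto simp: D_V_def)
  qed
  then show ?thesis by blast
next
  case True
  define p where "p i = (if i = n then n else n + i)" for i
  have "\<exists>T ET. is_subgraph S (induced_edges S (graph_square V E)) T ET
      \<and> is_subgraph T ET V (graph_square V E) \<and> graph_iso T ET (Dm_V n) (graph_square (Dm_V n) (Dm_E n))"
    unfolding S_def
  proof (rule spider_square_copy[where p = p])
    show "Dm_V n \<subseteq> {0..2*n}" "0 \<in> Dm_V n"
      using n_pos by (auto simp: Dm_V_def D_V_def)
    show "Dm_E n a b \<Longrightarrow> D_E n a b" for a b
      by (simp add: Dm_E_def induced_edges_def)
    show "symp (Dm_E n)"
      unfolding symp_def Dm_E_def induced_edges_def D_E_def by blast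
    show "E (mid i) (l i)" if "i \<in> {1..n}" "n + i \<in> Dm_V n" for i
      using mid_adj_leaf(1) nonadjacent that by (auto simp: Dm_V_def D_V_def)
    show "p i \<in> Dm_V n \<and> spider (p i) = l i \<and> graph_square (Dm_V n) (Dm_E n) 0 (p i)"
      if i: "i \<in> {1..n}" for i
    proof (cases "i = n")
      case True
      have "0 \<in> Dm_V n" "n \<in> Dm_V n"
        using n_pos by (auto simp: Dm_V_def D_V_def)
      then have "graph_square (Dm_V n) (Dm_E n) 0 n"
        using D_E_spokes[OF i] True n_pos
        unfolding graph_square_def Dm_E_def induced_edges_def by auto
      moreover have "spider n = l n"
        using \<open>E c (l n)\<close> n_pos by (simp add: mid_def)
      ultimately show ?thesis
        using True \<open>n \<in> Dm_V n\<close> by (simp add: p_def)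
    next
      case False
      then have "n + i \<in> Dm_V n" "i \<in> Dm_V n" "0 \<in> Dm_V n"
        using i by (auto simp: Dm_V_def D_V_def)
      moreover have "Dm_E n 0 i" "Dm_E n i (n + i)"
        using calculation D_E_spokes[OF i] by (simp_all add: Dm_E_def induced_edges_def)
      moreover have "0 \<noteq> n + i"
        using i by simp
      ultimately have "graph_square (Dm_V n) (Dm_E n) 0 (n + i)"
        unfolding graph_square_def by blast
      then show ?thesis
        using False i \<open>n + i \<in> Dm_V n\<close> by (simp add: p_def)
    qed
  qed
  then show ?thesis by blast
qed

end

lemma star_in_square_enumeration:
  assumes simple: "simple_graph V E" and n: "n \<ge> 1" and L: "finite L" "card L = n"
    and center: "\<And>x. x \<in> L \<Longrightarrow> graph_square V E c x"
    and indep: "\<And>x y. x \<in> L \<Longrightarrow> y \<in> L \<Longrightarrow> \<not> graph_square V E x y"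
  obtains l where "star_in_square V E c l n" "l ` {1..n} = L" "\<And>i. i \<in> {1..<n} \<Longrightarrow> \<not> E c (l i)"
proof -
  have adjacent_unique: "x = y" if "x \<in> L" "y \<in> L" "E c x" "E c y" for x y
  proof (rule ccontr)
    assume "x \<noteq> y"
    with graph_square_common_neighbour[OF simple that(3,4)] indep[OF that(1,2)] show False
      by blast
  qed
  obtain x where x: "x \<in> L" and last: "\<And>y. y \<in> L \<Longrightarrow> E c y \<Longrightarrow> y = x"
  proof (cases "\<exists>y\<in>L. E c y")
    case True
    then show thesis using that adjacent_unique by blast
  next
    case False
    moreover have "L \<noteq> {}" using L n by auto
    ultimately show thesis using that by blast
  qed
  obtain l where l: "bij_betw l {1..n} L" "l n = x"
    using ex_enumeration_last[OF L x] .
  have l_inj: "inj_on l {1..n}" and l_img: "l ` {1..n} = L"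
    using l(1) by (simp_all add: bij_betw_def)
  have l_in: "l i \<in> L" if "i \<in> {1..n}" for i
    using l_img that by blast
  have "star_in_square V E c l n"
  proof unfold_locales
    show "simple_graph V E" "n \<ge> 1" "inj_on l {1..n}"
      using simple n l_inj by simp_all
    show "graph_square V E c (l i)" if "i \<in> {1..n}" for i
      using center[OF l_in[OF that]] .
    show "\<not> graph_square V E (l i) (l j)" if "i \<in> {1..n}" "j \<in> {1..n}" "i \<noteq> j" for i j
      using indep[OF l_in[OF that(1)] l_in[OF that(2)]] .
  qed
  moreover have "\<not> E c (l i)" if "i \<in> {1..<n}" for i
  proof
    assume "E c (l i)"
    with last l_in that have "l i = l n"
      using l(2) by simp
    with l_inj that n have "i = n"
      by (simp add: inj_on_eq_iff)
    with that show False
      by simp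
  qed
  ultimately show thesis
    using that l_img by blast
qed

theorem theorem3:
  fixes V :: "'a set" and E :: "'a \<Rightarrow> 'a \<Rightarrow> bool" and n :: nat and S :: "'a set"
  assumes "simple_graph V E"
    and "n \<ge> 1"
    and "S \<subseteq> V"
    and "graph_iso S (induced_edges S (graph_square V E)) (star_V n) (star_E n)"
  shows "\<exists>T ET. is_subgraph S (induced_edges S (graph_square V E)) T ET
                \<and> is_subgraph T ET V (graph_square V E)
                \<and> (graph_iso T ET (D_V n) (graph_square (D_V n) (D_E n))
                   \<or> graph_iso T ET (Dm_V n) (graph_square (Dm_V n) (Dm_E n)))"
proof -
  obtain c L where S: "S = insert c L" and L: "finite L" "card L = n"
    and center: "\<And>x. x \<in> L \<Longrightarrow> graph_square V E c x"
    and indep: "\<And>x y. x \<in> L \<Longrightarrow> y \<in> L \<Longrightarrow> \<not> graph_square V E x y"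
    by (rule induced_star_iso_center_leaves[OF assms(4)]) (rule that)
  obtain l where l: "star_in_square V E c l n" and L_eq: "l ` {1..n} = L"
    and nonadjacent: "\<And>i. i \<in> {1..<n} \<Longrightarrow> \<not> E c (l i)"
    using star_in_square_enumeration[OF assms(1,2) L center indep] by blast
  from star_in_square.square_copy[OF l nonadjacent] show ?thesis
    unfolding S L_eq .
qed

end
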